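(* The unary implicit signature $\kappa$ is pure: for every positive integer $d$ and every $\alpha\in\widehat{\mathbb N}$, if $d\alpha$ is a $\bar\kappa$-exponent, then $\alpha$ is a $\bar\kappa$-exponent.
   Context: $\widehat{\mathbb N}$ is the profinite completion of $(\mathbb N,+)$. $\kappa$ is the implicit signature consisting of multiplication and the unary $(\omega-1)$-power. For a unary implicit signature (multiplication plus some $\alpha$-power operations with $\alpha\in\widehat{\mathbb N}\setminus\mathbb N$), its exponents are the $\alpha$ whose $\alpha$-power belongs to it; it is complete if its exponent set is stable under $\alpha\mapsto\alpha\pm1$, and $\bar\kappa$ is the smallest complete unary signature containing $\kappa$ (its exponents are $\omega+n$, $n\in\mathbb Z$). *)

theory Defs
  imports Main
begin

text \<open>The profinite completion of the additive monoid of natural numbers, realised as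
  the inverse limit of its finite quotients.  Every finite quotient of (nat,+) is a
  cyclic monoid C(i,p) = nat / (i = i+p) (index i, period p > 0), represented by
  {0..<i+p}; the canonical map nat -> C(i,p) is red i p.  For i <= i' and p dvd p'
  the quotient map C(i',p') -> C(i,p) is again red i p.  An element is a compatible
  family (x i p) for p > 0 (components with p = 0 are normalised to 0).\<close>

definition red :: "nat \<Rightarrow> nat \<Rightarrow> nat \<Rightarrow> nat" where
  "red i p m = (if m < i then m else i + (m - i) mod p)"

typedef pnat = "{x :: nat \<Rightarrow> nat \<Rightarrow> nat.
    (\<forall>i. x i 0 = 0) \<and>
    (\<forall>i p. 0 < p \<longrightarrow> x i p < i + p) \<and>
    (\<forall>i p i' p'. 0 < p \<and> 0 < p' \<and> i \<le> i' \<and> p dvd p' \<longrightarrow> x i p = red i p (x i' p'))}"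
  by (rule exI[of _ "\<lambda>_ _. 0"]) (auto simp: red_def)

definition padd :: "pnat \<Rightarrow> pnat \<Rightarrow> pnat" where
  "padd x y = Abs_pnat (\<lambda>i p. if p = 0 then 0 else red i p (Rep_pnat x i p + Rep_pnat y i p))"

definition pnat_of_nat :: "nat \<Rightarrow> pnat" where
  "pnat_of_nat n = Abs_pnat (\<lambda>i p. if p = 0 then 0 else red i p n)"

primrec pmult :: "nat \<Rightarrow> pnat \<Rightarrow> pnat" where
  "pmult 0 a = pnat_of_nat 0"
| "pmult (Suc n) a = padd a (pmult n a)"

text \<open>omega = lim n!, computed componentwise (n! is eventually constant in each C(i,p)).\<close>
definition pomega :: pnat where
  "pomega = Abs_pnat (\<lambda>i p. if p = 0 then 0 else red i p (fact (i + p)))"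

text \<open>Exponents of the completion of kappa: omega + n, n an integer.  For n >= 0 this is
  omega + n; for n = -m < 0 it is the element beta with beta + m = omega.\<close>
definition kbar_exponent :: "pnat \<Rightarrow> bool" where
  "kbar_exponent \<alpha> \<longleftrightarrow>
     (\<exists>n::nat. \<alpha> = padd pomega (pnat_of_nat n) \<or> padd \<alpha> (pnat_of_nat n) = pomega)"

end

theory Submission
  imports Defs
begin

text \<open>An element of the completion equals \<open>\<omega> + k\<close> (\<open>k \<in> \<int>\<close>) exactly when each of its components
  lies in the periodic part of its cyclic quotient and is congruent to \<open>k\<close> modulo the period.
  A component in the finite part stays there, with the same value, as the index grows; so if
  \<open>d\<alpha> = \<omega> + k\<close> then all components of \<open>\<alpha>\<close> are periodic. Reading \<open>d\<alpha>\<close> at period \<open>d\<close> gives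
  \<open>d dvd k\<close>, and reading it at period \<open>dp\<close> gives \<open>\<alpha> \<equiv> k div d\<close> modulo \<open>p\<close>.\<close>

lemma mod_eq_iff_int_dvd_diff: "(a::nat) mod p = b mod p \<longleftrightarrow> int p dvd int a - int b"
  by (metis mod_eq_dvd_iff of_nat_eq_iff of_nat_mod)

lemma red_below: "m < i \<Longrightarrow> red i p m = m"
  by (simp add: red_def)

lemma red_less: "0 < p \<Longrightarrow> red i p m < i + p"
  by (auto simp: red_def)

lemma red_ge_iff: "0 < p \<Longrightarrow> i \<le> red i p m \<longleftrightarrow> i \<le> m"
  by (auto simp: red_def)

lemma red_mod: "i \<le> m \<Longrightarrow> red i p m mod p = m mod p"
  by (simp add: red_def mod_add_right_eq)

lemma red_int_dvd: "i \<le> m \<Longrightarrow> int p dvd int (red i p m) - int m"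
  using red_mod by (simp add: mod_eq_iff_int_dvd_diff)

lemma red_cong:
  assumes "0 < p" "i \<le> a" "i \<le> b" "a mod p = b mod p"
  shows "red i p a = red i p b"
proof -
  have "(i + (a - i)) mod p = (i + (b - i)) mod p" using assms by simp
  then have "(a - i) mod p = (b - i) mod p" by (simp add: mod_eq_iff_int_dvd_diff)
  then show ?thesis using assms by (simp add: red_def)
qed

lemma red_unique:
  assumes "0 < p" "i \<le> v" "v < i + p" "i \<le> m" "int p dvd int v - int m"
  shows "v = red i p m"
proof -
  have "red i p v = v" using assms by (simp add: red_def le_mod_geq)
  moreover have "red i p v = red i p m"
    using assms by (intro red_cong) (auto simp: mod_eq_iff_int_dvd_diff)
  ultimately show ?thesis by simp
qed

lemma red_red:
  assumes "0 < p" "i \<le> i'" "p dvd p'"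
  shows "red i p (red i' p' m) = red i p m"
proof (cases "m < i'")
  case True then show ?thesis by (simp add: red_below)
next
  case False
  then have "red i' p' m mod p = m mod p"
    using assms(3) red_mod[of i' m p'] by (metis mod_mod_cancel not_less)
  moreover have "i' \<le> red i' p' m" using False red_ge_iff[of p' i' m] assms by (auto simp: red_def)
  ultimately show ?thesis using assms False by (intro red_cong) auto
qed

lemma red_add_red_right: "0 < p \<Longrightarrow> red i p (a + red i p b) = red i p (a + b)"
proof (cases "b < i")
  case True then show ?thesis by (simp add: red_below)
next
  case False
  assume "0 < p"
  moreover have "i \<le> red i p b" using False \<open>0 < p\<close> red_ge_iff by auto
  moreover have "(a + red i p b) mod p = (a + b) mod p"
    using red_mod[of i b p] False by (metis mod_add_right_eq not_less)
  ultimately show ?thesis using False by (intro red_cong) auto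
qed

lemma red_add_red_left: "0 < p \<Longrightarrow> red i p (red i p a + b) = red i p (a + b)"
  using red_add_red_right[of p i b a] by (simp add: add.commute)

lemma Rep_pnat_compat:
  "0 < p \<Longrightarrow> 0 < p' \<Longrightarrow> i \<le> i' \<Longrightarrow> p dvd p' \<Longrightarrow> Rep_pnat x i p = red i p (Rep_pnat x i' p')"
  using Rep_pnat[of x] by auto

lemma Rep_pnat_less: "0 < p \<Longrightarrow> Rep_pnat x i p < i + p"
  using Rep_pnat[of x] by auto

lemma Rep_pnat_period_0: "Rep_pnat x i 0 = 0"
  using Rep_pnat[of x] by auto

lemma Rep_pnat_Abs_pnat_red:
  assumes compat: "\<And>i p i' p'. 0 < p \<Longrightarrow> 0 < p' \<Longrightarrow> i \<le> i' \<Longrightarrow> p dvd p' \<Longrightarrow>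
      red i p (g i p) = red i p (g i' p')"
    and "0 < p"
  shows "Rep_pnat (Abs_pnat (\<lambda>i p. if p = 0 then 0 else red i p (g i p))) i p = red i p (g i p)"
proof -
  have "(\<lambda>i p. if p = 0 then 0 else red i p (g i p)) \<in> {x. (\<forall>i. x i 0 = 0) \<and>
      (\<forall>i p. 0 < p \<longrightarrow> x i p < i + p) \<and>
      (\<forall>i p i' p'. 0 < p \<and> 0 < p' \<and> i \<le> i' \<and> p dvd p' \<longrightarrow> x i p = red i p (x i' p'))}"
    using compat by (auto simp: red_less red_red)
  then show ?thesis using \<open>0 < p\<close> by (simp add: Abs_pnat_inverse)
qed

lemma Rep_pnat_padd:
  assumes "0 < p"
  shows "Rep_pnat (padd x y) i p = red i p (Rep_pnat x i p + Rep_pnat y i p)"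
  unfolding padd_def
proof (rule Rep_pnat_Abs_pnat_red[OF _ assms])
  fix i p i' p' :: nat
  assume *: "0 < p" "0 < p'" "i \<le> i'" "p dvd p'"
  show "red i p (Rep_pnat x i p + Rep_pnat y i p) = red i p (Rep_pnat x i' p' + Rep_pnat y i' p')"
    using Rep_pnat_compat[OF *, of x] Rep_pnat_compat[OF *, of y] red_red[OF *(1,3,4)]
    by (simp add: red_add_red_left red_add_red_right *(1))
qed

lemma Rep_pnat_of_nat: "0 < p \<Longrightarrow> Rep_pnat (pnat_of_nat n) i p = red i p n"
  unfolding pnat_of_nat_def by (rule Rep_pnat_Abs_pnat_red) auto

lemma Rep_pnat_pomega: "0 < p \<Longrightarrow> Rep_pnat pomega i p = red i p (fact (i + p))"
  unfolding pomega_def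
proof (rule Rep_pnat_Abs_pnat_red)
  fix i p i' p' :: nat
  assume *: "0 < p" "0 < p'" "i \<le> i'" "p dvd p'"
  have "p dvd fact (i + p)" "p dvd fact (i' + p')"
    using * dvd_trans[OF \<open>p dvd p'\<close>, of "fact (i' + p')"] by (simp_all add: dvd_fact)
  moreover have "i \<le> fact (i + p)" "i \<le> fact (i' + p')"
    using fact_ge_self[of "i + p"] fact_ge_self[of "i' + p'"] *(3) by linarith+
  ultimately show "red i p (fact (i + p)) = red i p (fact (i' + p'))"
    using *(1) by (intro red_cong) simp_all
qed

lemma Rep_pnat_pmult: "0 < p \<Longrightarrow> Rep_pnat (pmult d x) i p = red i p (d * Rep_pnat x i p)"
  by (induction d) (simp_all add: Rep_pnat_of_nat Rep_pnat_padd red_add_red_right)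

definition pnat_infinite :: "pnat \<Rightarrow> bool" where
  "pnat_infinite x \<longleftrightarrow> (\<forall>i p. 0 < p \<longrightarrow> i \<le> Rep_pnat x i p)"

definition omega_plus :: "pnat \<Rightarrow> int \<Rightarrow> bool" where
  "omega_plus x k \<longleftrightarrow> pnat_infinite x \<and> (\<forall>i p. 0 < p \<longrightarrow> int p dvd int (Rep_pnat x i p) - k)"

lemma Rep_pnat_below_index_stable:
  assumes "0 < p" "Rep_pnat x i p < i" "i \<le> i'"
  shows "Rep_pnat x i' p = Rep_pnat x i p"
proof -
  have eq: "Rep_pnat x i p = red i p (Rep_pnat x i' p)"
    using assms by (intro Rep_pnat_compat) auto
  then have "Rep_pnat x i' p < i" using assms red_ge_iff[of p i] by (metis not_less)
  then show ?thesis using eq by (simp add: red_below)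
qed

text \<open>Any pointwise operation read through \<open>red\<close> reflects infiniteness, because a finite
  component is stable under raising the index past the value of the operation.\<close>

lemma pnat_infinite_if_red_image_infinite:
  assumes y: "\<And>i p. 0 < p \<Longrightarrow> Rep_pnat y i p = red i p (h (Rep_pnat x i p))"
    and "pnat_infinite y"
  shows "pnat_infinite x"
  unfolding pnat_infinite_def
proof (intro allI impI)
  fix i p :: nat
  assume p: "0 < p"
  show "i \<le> Rep_pnat x i p"
  proof (rule ccontr)
    assume "\<not> i \<le> Rep_pnat x i p"
    define i' where "i' = max i (h (Rep_pnat x i p) + 1)"
    have "Rep_pnat x i' p = Rep_pnat x i p"
      using \<open>\<not> i \<le> Rep_pnat x i p\<close> p by (intro Rep_pnat_below_index_stable) (auto simp: i'_def)
    then have "Rep_pnat y i' p < i'" using y[OF p] by (simp add: i'_def red_below)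
    moreover have "i' \<le> Rep_pnat y i' p" using \<open>pnat_infinite y\<close> p by (simp add: pnat_infinite_def)
    ultimately show False by simp
  qed
qed

lemma omega_plus_pomega: "omega_plus pomega 0"
proof -
  have ge: "i \<le> fact (i + p)" for i p :: nat using fact_ge_self[of "i + p"] by linarith
  have dvd: "int p dvd int (red i p (fact (i + p)))" if "0 < p" for i p :: nat
  proof -
    have "p dvd fact (i + p)" using that by (simp add: dvd_fact)
    then have "int p dvd int (fact (i + p))" by (simp only: int_dvd_int_iff)
    with red_int_dvd[OF ge, of p]
    have "int p dvd (int (red i p (fact (i + p))) - int (fact (i + p))) + int (fact (i + p))"
      by (rule dvd_add)
    then show ?thesis by simp
  qed
  have "i \<le> Rep_pnat pomega i p" if "0 < p" for i p :: nat
    using ge by (simp add: Rep_pnat_pomega[OF that] red_ge_iff[OF that])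
  then show ?thesis
    using dvd by (simp add: omega_plus_def pnat_infinite_def Rep_pnat_pomega)
qed

lemma omega_plus_padd_nat:
  assumes "omega_plus x k"
  shows "omega_plus (padd x (pnat_of_nat n)) (k + int n)"
  unfolding omega_plus_def pnat_infinite_def
proof (intro conjI allI impI)
  fix i p :: nat
  assume p: "0 < p"
  have x: "i \<le> Rep_pnat x i p" "int p dvd int (Rep_pnat x i p) - k"
    using assms p by (auto simp: omega_plus_def pnat_infinite_def)
  have rep: "Rep_pnat (padd x (pnat_of_nat n)) i p = red i p (Rep_pnat x i p + n)"
    using p by (simp add: Rep_pnat_padd Rep_pnat_of_nat red_add_red_right)
  show "i \<le> Rep_pnat (padd x (pnat_of_nat n)) i p"
    using x(1) p by (simp add: rep red_ge_iff)
  have "int p dvd (int (red i p (Rep_pnat x i p + n)) - int (Rep_pnat x i p + n))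
      + (int (Rep_pnat x i p) - k)"
    using x by (intro dvd_add red_int_dvd) simp_all
  then show "int p dvd int (Rep_pnat (padd x (pnat_of_nat n)) i p) - (k + int n)"
    by (simp add: rep algebra_simps)
qed

lemma omega_plus_padd_nat_cancel:
  assumes "omega_plus (padd x (pnat_of_nat n)) k"
  shows "omega_plus x (k - int n)"
proof -
  have rep: "Rep_pnat (padd x (pnat_of_nat n)) i p = red i p (Rep_pnat x i p + n)"
    if "0 < p" for i p
    using that by (simp add: Rep_pnat_padd Rep_pnat_of_nat red_add_red_right)
  have "pnat_infinite x"
    using assms by (intro pnat_infinite_if_red_image_infinite[where h = "\<lambda>v. v + n", OF rep])
      (simp_all add: omega_plus_def)
  moreover have "int p dvd int (Rep_pnat x i p) - (k - int n)" if p: "0 < p" for i p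
  proof -
    have "int p dvd int (Rep_pnat (padd x (pnat_of_nat n)) i p) - k"
      using assms p by (simp add: omega_plus_def)
    then have "int p dvd int (red i p (Rep_pnat x i p + n)) - k"
      by (simp only: rep[OF p])
    moreover have "int p dvd int (red i p (Rep_pnat x i p + n)) - int (Rep_pnat x i p + n)"
      using \<open>pnat_infinite x\<close> p by (intro red_int_dvd) (simp add: pnat_infinite_def trans_le_add1)
    ultimately have "int p dvd (int (red i p (Rep_pnat x i p + n)) - k)
        - (int (red i p (Rep_pnat x i p + n)) - int (Rep_pnat x i p + n))"
      by (rule dvd_diff)
    then show ?thesis by (simp add: algebra_simps)
  qed
  ultimately show ?thesis by (simp add: omega_plus_def)
qed

lemma omega_plus_unique:
  assumes "omega_plus x k" "omega_plus y k"
  shows "x = y"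
proof -
  have "Rep_pnat x i p = Rep_pnat y i p" if p: "0 < p" for i p
  proof -
    have x: "i \<le> Rep_pnat x i p" "int p dvd int (Rep_pnat x i p) - k"
      and y: "i \<le> Rep_pnat y i p" "int p dvd int (Rep_pnat y i p) - k"
      using assms p by (auto simp: omega_plus_def pnat_infinite_def)
    have "int p dvd (int (Rep_pnat x i p) - k) - (int (Rep_pnat y i p) - k)"
      using x(2) y(2) by (rule dvd_diff)
    then have "Rep_pnat x i p = red i p (Rep_pnat y i p)"
      using p x(1) y(1) Rep_pnat_less by (intro red_unique) simp_all
    moreover have "Rep_pnat y i p = red i p (Rep_pnat y i p)"
      using p y(1) Rep_pnat_less by (intro red_unique) simp_all
    ultimately show ?thesis by simp
  qed
  then have "Rep_pnat x = Rep_pnat y"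
    by (intro ext) (metis Rep_pnat_period_0 not_gr_zero)
  then show ?thesis by (simp add: Rep_pnat_inject)
qed

lemma kbar_exponent_iff_omega_plus: "kbar_exponent x \<longleftrightarrow> (\<exists>k. omega_plus x k)"
proof
  assume "kbar_exponent x"
  then obtain n where "x = padd pomega (pnat_of_nat n) \<or> padd x (pnat_of_nat n) = pomega"
    by (auto simp: kbar_exponent_def)
  then show "\<exists>k. omega_plus x k"
    using omega_plus_padd_nat[OF omega_plus_pomega, of n]
      omega_plus_padd_nat_cancel[of x n 0] omega_plus_pomega by auto
next
  assume "\<exists>k. omega_plus x k"
  then obtain k where k: "omega_plus x k" ..
  show "kbar_exponent x"
  proof (cases "0 \<le> k")
    case True
    then have "omega_plus (padd pomega (pnat_of_nat (nat k))) k"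
      using omega_plus_padd_nat[OF omega_plus_pomega, of "nat k"] by simp
    then show ?thesis using k omega_plus_unique by (auto simp: kbar_exponent_def)
  next
    case False
    then have "omega_plus (padd x (pnat_of_nat (nat (- k)))) 0"
      using omega_plus_padd_nat[OF k, of "nat (- k)"] by simp
    then show ?thesis using omega_plus_pomega omega_plus_unique by (auto simp: kbar_exponent_def)
  qed
qed

lemma omega_plus_pmult_cancel:
  assumes "0 < d" and dx: "omega_plus (pmult d x) k"
  shows "int d dvd k" and "omega_plus x (k div int d)"
proof -
  have "pnat_infinite (pmult d x)" using dx by (simp add: omega_plus_def)
  with Rep_pnat_pmult have inf: "pnat_infinite x"
    by (rule pnat_infinite_if_red_image_infinite)
  have cong: "int p dvd int (d * Rep_pnat x i p) - k" if p: "0 < p" for i p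
  proof -
    have "i \<le> Rep_pnat x i p" using inf p by (simp add: pnat_infinite_def)
    also have "\<dots> \<le> d * Rep_pnat x i p" using \<open>0 < d\<close> by simp
    finally have "i \<le> d * Rep_pnat x i p" .
    then have "int p dvd int (red i p (d * Rep_pnat x i p)) - int (d * Rep_pnat x i p)"
      by (rule red_int_dvd)
    moreover have "int p dvd int (red i p (d * Rep_pnat x i p)) - k"
      using dx p by (simp add: omega_plus_def Rep_pnat_pmult)
    ultimately have "int p dvd (int (red i p (d * Rep_pnat x i p)) - k)
        - (int (red i p (d * Rep_pnat x i p)) - int (d * Rep_pnat x i p))"
      by (rule dvd_diff[rotated])
    then show ?thesis by simp
  qed
  have "int d dvd int (d * Rep_pnat x 0 d)" by simp
  then have "int d dvd int (d * Rep_pnat x 0 d) - (int (d * Rep_pnat x 0 d) - k)"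
    using cong[OF \<open>0 < d\<close>] by (rule dvd_diff)
  then show "int d dvd k" by simp
  then obtain q where q: "k = int d * q" ..
  have "int p dvd int (Rep_pnat x i p) - q" if p: "0 < p" for i p
  proof -
    have dp: "0 < d * p" using p \<open>0 < d\<close> by simp
    have "int d * int p dvd int d * (int (Rep_pnat x i (d * p)) - q)"
      using cong[OF dp, of i] q by (simp add: right_diff_distrib)
    then have "int p dvd int (Rep_pnat x i (d * p)) - q" using \<open>0 < d\<close> by simp
    moreover have "int p dvd int (Rep_pnat x i p) - int (Rep_pnat x i (d * p))"
      using Rep_pnat_compat[OF p dp, of i i x] red_int_dvd inf dp by (simp add: pnat_infinite_def)
    ultimately have "int p dvd (int (Rep_pnat x i p) - int (Rep_pnat x i (d * p)))
        + (int (Rep_pnat x i (d * p)) - q)"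
      by (rule dvd_add[rotated])
    then show ?thesis by simp
  qed
  then show "omega_plus x (k div int d)"
    using inf q \<open>0 < d\<close> by (simp add: omega_plus_def)
qed

theorem lemma3p2:
  fixes d :: nat and \<alpha> :: pnat
  assumes "0 < d"
    and "kbar_exponent (pmult d \<alpha>)"
  shows "kbar_exponent \<alpha>"
proof -
  obtain k where "omega_plus (pmult d \<alpha>) k"
    using assms(2) by (auto simp: kbar_exponent_iff_omega_plus)
  with assms(1) have "omega_plus \<alpha> (k div int d)"
    by (rule omega_plus_pmult_cancel)
  then show ?thesis by (auto simp: kbar_exponent_iff_omega_plus)
qed

end
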